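(* In the setting of the context, there is a constant $N_2>0$ such that for every integer $r\ge r_0$ and all $\epsilon,\epsilon'\in\{-1,1\}$ there is a path in the Cayley graph $\Gamma(G_2,S_2)$ connecting $s_1^{\epsilon r}$ to $s_2^{\epsilon' r}$ which lies outside the open ball $B(e,r)$ and has length at most $N_2r\bigl(f(N_2r)+1\bigr)$.
   Context: $H$ is a finitely presented group with finite generating set $T$, containing a free subgroup $F$ of rank $p$ with free basis $R=\{d_1,\dots,d_p\}\subset T$. $F_x,F_y,F_z$ are free of rank $p$ with bases $R_x=\{x_i\},R_y=\{y_i\},R_z=\{z_i\}$. $G_1=[H\ast_{\langle d_i=x_iy_i^{-1}\rangle}(F_x\times F_y\times F_z)]\times\langle s_1\rangle$; $a_i=x_iz_i$, $b_i=y_iz_i$, $R_{xz}=\{a_i\}$, $R_{yz}=\{b_i\}$; $G_2=\langle G_1,s_2\mid s_2^{-1}a_is_2=b_i,\ 1\le i\le p\rangle$; $S_2=T\cup R_x\cup R_y\cup R_z\cup R_{xz}\cup R_{yz}\cup\{s_1,s_2\}$. $f=\Delta^{-1}$ where $\Delta$ is a non-decreasing bijection of $[0,\infty)$ Lipschitz equivalent to $\mathrm{Dist}_F^H$ (with $\mathrm{Dist}_F^H(n)=\max\{|g|_R:g\in F,|g|_T\le n\}$), $\Delta(r)\ge r$ for $r\ge1$, $f(|g|_R)\le|g|_T$ for $g\in F$; and $D>1$, $r_0\ge1$ are constants such that for each $r\ge r_0$ there is an element $u\in F$ palindromic with respect to $R$ with $r/D\le|u|_R\le r$ and $|u|_T\le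 Df(r)$. (Such data exist under the standing assumption that $\mathrm{Dist}_F^H$ admits an exponentially bounded sequence of palindromic certificates in $F$.) *)

theory Defs
  imports "HOL-Algebra.Algebra"
begin

definition word_eval :: "('a, 'b) monoid_scheme \<Rightarrow> ('a \<times> bool) list \<Rightarrow> 'a" where
  "word_eval G w = foldr (\<lambda>(g, b) acc. (if b then inv\<^bsub>G\<^esub> g else g) \<otimes>\<^bsub>G\<^esub> acc) w \<one>\<^bsub>G\<^esub>"

inductive word_eq :: "('g \<times> bool) list set \<Rightarrow> ('g \<times> bool) list \<Rightarrow> ('g \<times> bool) list \<Rightarrow> bool"
  for Rel where
  we_refl: "word_eq Rel u u"
| we_sym: "word_eq Rel u v \<Longrightarrow> word_eq Rel v u"
| we_trans: "word_eq Rel u v \<Longrightarrow> word_eq Rel v w \<Longrightarrow> word_eq Rel u w"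
| we_cancel: "word_eq Rel (u @ [(a, b), (a, \<not> b)] @ v) (u @ v)"
| we_rel: "r \<in> Rel \<Longrightarrow> word_eq Rel (u @ r @ v) (u @ v)"

definition freely_reduced :: "('g \<times> bool) list \<Rightarrow> bool" where
  "freely_reduced w \<longleftrightarrow>
     (\<forall>i. Suc i < length w \<longrightarrow> \<not> (fst (w ! i) = fst (w ! Suc i) \<and> snd (w ! i) \<noteq> snd (w ! Suc i)))"

definition finitely_presented_on :: "('a, 'b) monoid_scheme \<Rightarrow> 'a set \<Rightarrow> bool" where
  "finitely_presented_on H T \<longleftrightarrow>
     group H \<and> finite T \<and> T \<subseteq> carrier H \<and> generate H T = carrier H \<and>
     (\<exists>Rel. finite Rel \<and> Rel \<subseteq> lists (T \<times> UNIV) \<and>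
        (\<forall>w \<in> lists (T \<times> UNIV). word_eval H w = \<one>\<^bsub>H\<^esub> \<longleftrightarrow> word_eq Rel w []))"

definition wlen :: "('a, 'b) monoid_scheme \<Rightarrow> 'a set \<Rightarrow> 'a \<Rightarrow> nat" where
  "wlen H S g = (LEAST n. \<exists>w \<in> lists (S \<times> UNIV). length w = n \<and> word_eval H w = g)"

definition free_basis :: "('a, 'b) monoid_scheme \<Rightarrow> (nat \<Rightarrow> 'a) \<Rightarrow> nat \<Rightarrow> bool" where
  "free_basis H d p \<longleftrightarrow> inj_on d {..<p} \<and>
     (\<forall>w \<in> lists (d ` {..<p} \<times> UNIV). freely_reduced w \<and> w \<noteq> [] \<longrightarrow> word_eval H w \<noteq> \<one>\<^bsub>H\<^esub>)"

definition palindromic :: "('a, 'b) monoid_scheme \<Rightarrow> 'a set \<Rightarrow> 'a \<Rightarrow> bool" where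
  "palindromic H R u \<longleftrightarrow>
     (\<exists>w \<in> lists (R \<times> UNIV). freely_reduced w \<and> word_eval H w = u \<and> rev w = w)"

definition distortion :: "('a, 'b) monoid_scheme \<Rightarrow> 'a set \<Rightarrow> 'a set \<Rightarrow> nat \<Rightarrow> nat" where
  "distortion H T R n = Max {wlen H R g | g. g \<in> generate H R \<and> wlen H T g \<le> n}"

definition lipschitz_equiv :: "(real \<Rightarrow> real) \<Rightarrow> (nat \<Rightarrow> nat) \<Rightarrow> bool" where
  "lipschitz_equiv \<Delta> Dist \<longleftrightarrow> (\<exists>C::nat. C \<ge> 1 \<and> (\<forall>n::nat.
      \<Delta> (real n) \<le> real C * real (Dist (C * n + C)) + real (C * n + C) \<and>
      real (Dist n) \<le> real C * \<Delta> (real (C * n + C)) + real (C * n + C)))"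

datatype 'a gen2 = Tg 'a | Xg nat | Yg nat | Zg nat | Ag nat | Bg nat | S1g | S2g

fun valid2 :: "'a set \<Rightarrow> nat \<Rightarrow> 'a gen2 \<Rightarrow> bool" where
  "valid2 T p (Tg t) = (t \<in> T)"
| "valid2 T p (Xg i) = (i < p)"
| "valid2 T p (Yg i) = (i < p)"
| "valid2 T p (Zg i) = (i < p)"
| "valid2 T p (Ag i) = (i < p)"
| "valid2 T p (Bg i) = (i < p)"
| "valid2 T p S1g = True"
| "valid2 T p S2g = True"

definition commutator :: "'g \<Rightarrow> 'g \<Rightarrow> ('g \<times> bool) list" where
  "commutator a b = [(a, False), (b, False), (a, True), (b, True)]"

text \<open>Relators of G_2 over S_2:
  all relations of H on T; d_i = x_i y_i^-1; x,y,z families pairwise commuting;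
  s_1 central in G_1; a_i = x_i z_i; b_i = y_i z_i; s_2^-1 a_i s_2 = b_i.\<close>
definition rels2 :: "('a, 'b) monoid_scheme \<Rightarrow> 'a set \<Rightarrow> (nat \<Rightarrow> 'a) \<Rightarrow> nat \<Rightarrow> ('a gen2 \<times> bool) list set" where
  "rels2 H T d p =
     {map (\<lambda>(t, b). (Tg t, b)) w | w. w \<in> lists (T \<times> UNIV) \<and> word_eval H w = \<one>\<^bsub>H\<^esub>}
   \<union> {[(Tg (d i), False), (Yg i, False), (Xg i, True)] | i. i < p}
   \<union> {commutator (Xg i) (Yg j) | i j. i < p \<and> j < p}
   \<union> {commutator (Xg i) (Zg j) | i j. i < p \<and> j < p}
   \<union> {commutator (Yg i) (Zg j) | i j. i < p \<and> j < p}
   \<union> {commutator S1g g | g. valid2 T p g \<and> g \<noteq> S1g \<and> g \<noteq> S2g}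
   \<union> {[(Ag i, False), (Zg i, True), (Xg i, True)] | i. i < p}
   \<union> {[(Bg i, False), (Zg i, True), (Yg i, True)] | i. i < p}
   \<union> {[(S2g, True), (Ag i, False), (S2g, False), (Bg i, True)] | i. i < p}"

text \<open>Word length in G_2 with respect to S_2 of the element represented by w
  (= distance from e in the Cayley graph Gamma(G_2, S_2)).\<close>
definition len2 :: "('a, 'b) monoid_scheme \<Rightarrow> 'a set \<Rightarrow> (nat \<Rightarrow> 'a) \<Rightarrow> nat \<Rightarrow> ('a gen2 \<times> bool) list \<Rightarrow> nat" where
  "len2 H T d p w = (LEAST n. \<exists>w'. (\<forall>l \<in> set w'. valid2 T p (fst l)) \<and> length w' = n
                                   \<and> word_eq (rels2 H T d p) w w')"

end

theory Submission
  imports Defs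
begin

(* Let u be a palindromic certificate with r <= |u|_R <= D r and |u|_T <= D f(D r), let w be its
   freely reduced R-word and v a geodesic T-word for u.  Starting at s_1^r, walk along a(w), then
   s_1^-r, then r times (s_2 v), then back along a(w)^-1 (for s_2^-r use b(w), s_2^-1 and v^-1).
   Since w is a palindrome, the relations d_i = x_i y_i^-1 give b(w) d(w) = a(w) in G_1, and with
   s_2^-1 a(w) s_2 = b(w) this yields a(w) s_2 v a(w)^-1 = s_2, so the path ends at s_2^r.
   Its length is O(r + r |u|_T) = O(r f(r)).
   The path avoids B(e, r) because word length in G_2 is bounded below by |e_1| + |e_2| + |phi|,
   where e_1, e_2 are the exponent sums of s_1, s_2 and phi : G_2 -> F_p sends a_i, b_i, z_i to
   the i-th free generator and kills the other generators: on the first segment e_1 = r, on the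
   middle one phi is the reduced word w of length >= r, and on the last one e_2 = r. *)

section \<open>Inverse words and free reduction\<close>

definition letter_inv :: "'g \<times> bool \<Rightarrow> 'g \<times> bool" where
  "letter_inv l = (fst l, \<not> snd l)"

definition word_inv :: "('g \<times> bool) list \<Rightarrow> ('g \<times> bool) list" where
  "word_inv w = rev (map letter_inv w)"

lemma letter_inv_pair [simp]: "letter_inv (a, b) = (a, \<not> b)"
  by (simp add: letter_inv_def)

lemma letter_inv_letter_inv [simp]: "letter_inv (letter_inv l) = l"
  and fst_letter_inv [simp]: "fst (letter_inv l) = fst l"
  by (simp_all add: letter_inv_def)

lemma word_inv_simps [simp]:
  "word_inv [] = []"
  "word_inv (l # w) = word_inv w @ [letter_inv l]"
  "word_inv (u @ v) = word_inv v @ word_inv u"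
  "word_inv (word_inv w) = w"
  "length (word_inv w) = length w"
  "set (word_inv w) = letter_inv ` set w"
  by (simp_all add: word_inv_def rev_map comp_def)

lemma fst_image_letter_inv [simp]: "fst ` letter_inv ` A = fst ` A"
  by (simp add: image_image)

lemma word_inv_replicate [simp]: "word_inv (replicate n l) = replicate n (letter_inv l)"
  by (simp add: word_inv_def)

lemma word_inv_map_apfst: "word_inv (map (apfst f) w) = map (apfst f) (word_inv w)"
  by (induction w) auto

lemma freely_reduced_Nil [simp]: "freely_reduced []"
  and freely_reduced_single [simp]: "freely_reduced [a]"
  by (simp_all add: freely_reduced_def)

lemma freely_reduced_Cons_Cons [simp]:
  "freely_reduced (a # b # w) \<longleftrightarrow> b \<noteq> letter_inv a \<and> freely_reduced (b # w)"
proof -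
  have "b = letter_inv a \<longleftrightarrow> fst a = fst b \<and> snd a \<noteq> snd b"
    by (cases a; cases b) auto
  then show ?thesis
    unfolding freely_reduced_def by (auto simp: less_Suc_eq_0_disj all_conj_distrib)
qed

lemma freely_reduced_ConsD: "freely_reduced (a # w) \<Longrightarrow> freely_reduced w"
  by (cases w) auto

lemma freely_reduced_map_apfstD: "freely_reduced (map (apfst f) w) \<Longrightarrow> freely_reduced w"
proof (induction w rule: induct_list012)
  case (3 a b w)
  then show ?case
    by (cases a; cases b) auto
qed simp_all

fun cancel_cons :: "'g \<times> bool \<Rightarrow> ('g \<times> bool) list \<Rightarrow> ('g \<times> bool) list" where
  "cancel_cons a [] = [a]"
| "cancel_cons a (b # w) = (if b = letter_inv a then w else a # b # w)"

definition free_reduce :: "('g \<times> bool) list \<Rightarrow> ('g \<times> bool) list" where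
  "free_reduce w = foldr cancel_cons w []"

lemma free_reduce_Nil [simp]: "free_reduce [] = []"
  and free_reduce_Cons [simp]: "free_reduce (a # w) = cancel_cons a (free_reduce w)"
  by (simp_all add: free_reduce_def)

lemma freely_reduced_cancel_cons: "freely_reduced w \<Longrightarrow> freely_reduced (cancel_cons a w)"
  by (induction w rule: induct_list012) (auto dest: freely_reduced_ConsD)

lemma freely_reduced_foldr_cancel_cons: "freely_reduced w \<Longrightarrow> freely_reduced (foldr cancel_cons u w)"
  by (induction u) (auto intro: freely_reduced_cancel_cons)

lemma freely_reduced_free_reduce: "freely_reduced (free_reduce w)"
  unfolding free_reduce_def by (simp add: freely_reduced_foldr_cancel_cons)

lemma cancel_cons_letter_inv:
  "freely_reduced w \<Longrightarrow> cancel_cons (letter_inv a) (cancel_cons a w) = w"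
  by (induction w rule: induct_list012) auto

lemma foldr_cancel_cons_word_inv:
  "freely_reduced w \<Longrightarrow> foldr cancel_cons (word_inv u) (foldr cancel_cons u w) = w"
  by (induction u arbitrary: w) (simp_all add: cancel_cons_letter_inv freely_reduced_foldr_cancel_cons)

lemma foldr_cancel_cons_cancel_cons:
  assumes "freely_reduced u" and "freely_reduced w"
  shows "foldr cancel_cons (cancel_cons a u) w = cancel_cons a (foldr cancel_cons u w)"
proof (cases u)
  case (Cons b u')
  have "freely_reduced (foldr cancel_cons u' w)"
    using assms Cons by (auto intro: freely_reduced_foldr_cancel_cons dest: freely_reduced_ConsD)
  then show ?thesis
    using Cons cancel_cons_letter_inv[of _ "letter_inv a"] by auto
qed simp

lemma foldr_cancel_cons_free_reduce:
  "freely_reduced w \<Longrightarrow> foldr cancel_cons (free_reduce u) w = foldr cancel_cons u w"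
  by (induction u)
    (simp_all add: foldr_cancel_cons_cancel_cons freely_reduced_free_reduce)

lemma free_reduce_append: "free_reduce (u @ v) = foldr cancel_cons u (free_reduce v)"
  by (simp add: free_reduce_def)

lemma free_reduce_freely_reduced: "freely_reduced w \<Longrightarrow> free_reduce w = w"
  by (induction w rule: induct_list012) (auto simp: free_reduce_def dest: freely_reduced_ConsD)

lemma free_reduce_append_word_inv: "free_reduce (w @ word_inv w) = []"
  using foldr_cancel_cons_word_inv[of "[]" "word_inv w"] by (simp add: free_reduce_def)

lemma free_reduce_Nil_infix:
  assumes "free_reduce v = []"
  shows "free_reduce (u @ v @ w) = free_reduce (u @ w)"
proof -
  have "foldr cancel_cons v (free_reduce w) = foldr cancel_cons (free_reduce v) (free_reduce w)"
    by (simp only: foldr_cancel_cons_free_reduce freely_reduced_free_reduce)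
  then show ?thesis
    using assms by (simp add: free_reduce_append)
qed

lemma length_foldr_cancel_cons: "length (foldr cancel_cons u w) \<le> length u + length w"
proof (induction u)
  case (Cons a u)
  have "length (cancel_cons a v) \<le> Suc (length v)" for v :: "('a \<times> bool) list"
    by (cases v) auto
  with Cons show ?case by (auto intro: le_trans)
qed simp

lemma length_free_reduce: "length (free_reduce w) \<le> length w"
  using length_foldr_cancel_cons[of w "[]"] by (simp add: free_reduce_def)

lemma set_free_reduce: "set (free_reduce w) \<subseteq> set w"
proof -
  have "set (cancel_cons a v) \<subseteq> insert a (set v)" for a and v :: "('a \<times> bool) list"
    by (cases v) auto
  then have "set (foldr cancel_cons u []) \<subseteq> set u" for u :: "('a \<times> bool) list"
    by (induction u) fastforce+
  then show ?thesis by (simp add: free_reduce_def)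
qed

section \<open>Evaluation in a group and free bases\<close>

lemma word_eval_Nil [simp]: "word_eval G [] = \<one>\<^bsub>G\<^esub>"
  and word_eval_Cons [simp]:
    "word_eval G ((g, b) # w) = (if b then inv\<^bsub>G\<^esub> g else g) \<otimes>\<^bsub>G\<^esub> word_eval G w"
  by (simp_all add: word_eval_def)

context group
begin

lemma word_eval_closed: "fst ` set w \<subseteq> carrier G \<Longrightarrow> word_eval G w \<in> carrier G"
  by (induction w) auto

lemma word_eval_append:
  "fst ` set u \<subseteq> carrier G \<Longrightarrow> fst ` set v \<subseteq> carrier G \<Longrightarrow>
    word_eval G (u @ v) = word_eval G u \<otimes> word_eval G v"
  by (induction u) (auto simp: m_assoc word_eval_closed)

lemma word_eval_cancel_cons:
  assumes "fst a \<in> carrier G" and "fst ` set w \<subseteq> carrier G"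
  shows "word_eval G (cancel_cons a w) = word_eval G (a # w)"
proof (cases w)
  case (Cons b w')
  have "word_eval G w' \<in> carrier G"
    using assms Cons by (intro word_eval_closed) auto
  with assms Cons show ?thesis
    by (cases a) (auto simp: m_assoc[symmetric])
qed simp

lemma word_eval_free_reduce:
  "fst ` set w \<subseteq> carrier G \<Longrightarrow> word_eval G (free_reduce w) = word_eval G w"
proof (induction w)
  case (Cons a w)
  have "fst ` set (free_reduce w) \<subseteq> carrier G"
    using Cons.prems set_free_reduce[of w] by auto
  with Cons show ?case
    by (cases a) (simp add: word_eval_cancel_cons)
qed simp

lemma word_eval_word_inv:
  "fst ` set w \<subseteq> carrier G \<Longrightarrow> word_eval G (word_inv w) = inv (word_eval G w)"
proof (induction w)
  case (Cons a w)
  then show ?case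
    by (cases a) (auto simp: word_eval_append word_eval_closed inv_mult_group image_image)
qed simp

end

lemma wlen_witness:
  assumes "w \<in> lists (S \<times> UNIV)" and "word_eval H w = g"
  obtains w' where "w' \<in> lists (S \<times> UNIV)" and "length w' = wlen H S g" and "word_eval H w' = g"
proof -
  let ?P = "\<lambda>n. \<exists>w \<in> lists (S \<times> UNIV). length w = n \<and> word_eval H w = g"
  have "?P (Least ?P)"
    using assms by (intro LeastI[of ?P "length w"]) blast
  with that show thesis
    unfolding wlen_def by blast
qed

lemma wlen_le_length:
  "w \<in> lists (S \<times> UNIV) \<Longrightarrow> wlen H S (word_eval H w) \<le> length w"
  unfolding wlen_def by (rule Least_le) blast

lemma free_basis_freely_reduced_unique:
  assumes "group H" and "d ` {..<p} \<subseteq> carrier H" and "free_basis H d p"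
    and "u \<in> lists (d ` {..<p} \<times> UNIV)" and "v \<in> lists (d ` {..<p} \<times> UNIV)"
    and "freely_reduced u" and "freely_reduced v" and "word_eval H u = word_eval H v"
  shows "u = v"
proof -
  interpret group H by fact
  have u: "fst ` set u \<subseteq> carrier H" and v: "fst ` set v \<subseteq> carrier H"
    using assms(2,4,5) by fastforce+
  define c where "c = free_reduce (u @ word_inv v)"
  have "c \<in> lists (d ` {..<p} \<times> UNIV)"
    using set_free_reduce[of "u @ word_inv v"] assms(4,5) by (fastforce simp: c_def)
  moreover have "word_eval H c = \<one>\<^bsub>H\<^esub>"
  proof -
    have "word_eval H c = word_eval H (u @ word_inv v)"
      unfolding c_def using u v by (intro word_eval_free_reduce) auto
    also have "\<dots> = word_eval H u \<otimes>\<^bsub>H\<^esub> inv\<^bsub>H\<^esub> word_eval H v"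
      using word_eval_append[OF u, of "word_inv v"] word_eval_word_inv[OF v] v by simp
    finally show ?thesis
      using assms(8) v by (simp add: word_eval_closed)
  qed
  ultimately have "c = []"
    using assms(3) freely_reduced_free_reduce unfolding free_basis_def c_def by blast
  have "u = free_reduce u"
    using assms(6) by (simp add: free_reduce_freely_reduced)
  also have "\<dots> = free_reduce (u @ word_inv v @ v)"
    by (simp add: free_reduce_def foldr_cancel_cons_word_inv)
  also have "\<dots> = foldr cancel_cons (u @ word_inv v) v"
    using assms(7) by (simp add: free_reduce_append free_reduce_freely_reduced)
  also have "\<dots> = v"
    using \<open>c = []\<close> assms(7) foldr_cancel_cons_free_reduce[of v "u @ word_inv v"] by (simp add: c_def)
  finally show ?thesis .
qed

lemma free_basis_wlen_freely_reduced:
  assumes "group H" and "d ` {..<p} \<subseteq> carrier H" and "free_basis H d p"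
    and "w \<in> lists (d ` {..<p} \<times> UNIV)" and "freely_reduced w"
  shows "wlen H (d ` {..<p}) (word_eval H w) = length w"
proof (rule antisym)
  show "wlen H (d ` {..<p}) (word_eval H w) \<le> length w"
    using assms(4) by (rule wlen_le_length)
  obtain w' where w': "w' \<in> lists (d ` {..<p} \<times> UNIV)" "length w' = wlen H (d ` {..<p}) (word_eval H w)"
    "word_eval H w' = word_eval H w"
    using assms(4) by (rule wlen_witness) (rule refl)
  interpret group H by fact
  have "free_reduce w' = w"
  proof (rule free_basis_freely_reduced_unique[OF assms(1-3) _ assms(4) freely_reduced_free_reduce assms(5)])
    show "free_reduce w' \<in> lists (d ` {..<p} \<times> UNIV)"
      using w'(1) set_free_reduce[of w'] by blast
    show "word_eval H (free_reduce w') = word_eval H w"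
      using w' assms(2) by (subst word_eval_free_reduce) fastforce+
  qed
  then show "length w \<le> wlen H (d ` {..<p}) (word_eval H w)"
    using length_free_reduce[of w'] w'(2) by simp
qed

section \<open>Calculus of equivalent words\<close>

declare word_eq.we_trans [trans]

lemma word_eq_in_context: "word_eq Rel u v \<Longrightarrow> word_eq Rel (x @ u @ y) (x @ v @ y)"
proof (induction rule: word_eq.induct)
  case (we_cancel u a b v)
  then show ?case
    using word_eq.we_cancel[of Rel "x @ u" a b "v @ y"] by simp
next
  case (we_rel r u v)
  then show ?case
    using word_eq.we_rel[of r Rel "x @ u" "v @ y"] by simp
qed (auto intro: word_eq.intros)

lemma word_eq_append_left: "word_eq Rel u v \<Longrightarrow> word_eq Rel (x @ u) (x @ v)"
  using word_eq_in_context[of Rel u v x "[]"] by simp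

lemma word_eq_append_right: "word_eq Rel u v \<Longrightarrow> word_eq Rel (u @ y) (v @ y)"
  using word_eq_in_context[of Rel u v "[]" y] by simp

lemma word_eq_append: "word_eq Rel u u' \<Longrightarrow> word_eq Rel v v' \<Longrightarrow> word_eq Rel (u @ v) (u' @ v')"
  by (rule word_eq.we_trans[OF word_eq_append_right word_eq_append_left])

lemma word_eq_cancel_letter_inv: "word_eq Rel (u @ [l, letter_inv l] @ v) (u @ v)"
  using word_eq.we_cancel[of Rel u "fst l" "snd l" v] by (simp add: letter_inv_def)

lemma word_eq_cancel_letter_inv': "word_eq Rel (u @ [letter_inv l, l] @ v) (u @ v)"
  using word_eq_cancel_letter_inv[of Rel u "letter_inv l" v] by simp

lemma word_eq_append_word_inv: "word_eq Rel (w @ word_inv w) []"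
proof (induction w)
  case (Cons l w)
  have "word_eq Rel ([l] @ (w @ word_inv w) @ [letter_inv l]) ([] @ [l, letter_inv l] @ [])"
    using word_eq_in_context[OF Cons.IH, of "[l]" "[letter_inv l]"] by simp
  also have "word_eq Rel \<dots> []"
    using word_eq_cancel_letter_inv[of Rel "[]" l "[]"] by simp
  finally show ?case
    by simp
qed (simp add: word_eq.we_refl)

lemma word_eq_word_inv_append: "word_eq Rel (word_inv w @ w) []"
  using word_eq_append_word_inv[of Rel "word_inv w"] by simp

lemma word_eq_iff_append_word_inv: "word_eq Rel u v \<longleftrightarrow> word_eq Rel (u @ word_inv v) []"
proof
  assume "word_eq Rel u v"
  then have "word_eq Rel (u @ word_inv v) (v @ word_inv v)"
    by (rule word_eq_append_right)
  then show "word_eq Rel (u @ word_inv v) []"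
    using word_eq_append_word_inv by (rule word_eq.we_trans)
next
  assume h: "word_eq Rel (u @ word_inv v) []"
  have "word_eq Rel (u @ []) (u @ word_inv v @ v)"
    by (rule word_eq.we_sym[OF word_eq_append_left[OF word_eq_word_inv_append]])
  also have "word_eq Rel \<dots> ([] @ v)"
    using word_eq_append_right[OF h] by simp
  finally show "word_eq Rel u v"
    by simp
qed

lemma word_eq_word_inv: "word_eq Rel u v \<Longrightarrow> word_eq Rel (word_inv u) (word_inv v)"
proof -
  assume "word_eq Rel u v"
  then have "word_eq Rel (word_inv u @ v) (word_inv u @ u)"
    by (rule word_eq_append_left[OF word_eq.we_sym])
  also have "word_eq Rel \<dots> []"
    by (rule word_eq_word_inv_append)
  finally show ?thesis
    using word_eq_iff_append_word_inv[of Rel "word_inv u" "word_inv v"] by simp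
qed

lemma relator_word_eq_Nil: "r \<in> Rel \<Longrightarrow> word_eq Rel r []"
  using word_eq.we_rel[of r Rel "[]" "[]"] by simp

lemma word_eq_Nil_rotate: "word_eq Rel (u @ v) [] \<Longrightarrow> word_eq Rel (v @ u) []"
proof -
  assume h: "word_eq Rel (u @ v) []"
  have "word_eq Rel (v @ u) (v @ (u @ v) @ word_inv v)"
    using word_eq.we_sym[OF word_eq_append_left[where x = "v @ u", OF word_eq_append_word_inv[of Rel v]]]
    by simp
  also have "word_eq Rel \<dots> (v @ [] @ word_inv v)"
    using h by (rule word_eq_in_context)
  also have "word_eq Rel \<dots> []"
    using word_eq_append_word_inv by simp
  finally show ?thesis .
qed

text \<open>The relation \<open>word_eq Rel [x, s] [s, y]\<close> says that conjugating \<open>x\<close> by \<open>s\<close>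
  gives \<open>y\<close>.\<close>

lemma word_eq_conjugate_letter_inv:
  assumes "word_eq Rel [x, s] [s, y]"
  shows "word_eq Rel [letter_inv x, s] [s, letter_inv y]"
proof -
  have "word_eq Rel [letter_inv x, s] ([letter_inv x] @ [s, y] @ [letter_inv y])"
    using word_eq.we_sym[OF word_eq_cancel_letter_inv[of Rel "[letter_inv x, s]" y "[]"]] by simp
  also have "word_eq Rel \<dots> ([letter_inv x] @ [x, s] @ [letter_inv y])"
    using assms by (rule word_eq_in_context[OF word_eq.we_sym])
  also have "word_eq Rel \<dots> [s, letter_inv y]"
    using word_eq_cancel_letter_inv'[of Rel "[]" x "[s, letter_inv y]"] by simp
  finally show ?thesis .
qed

lemma word_eq_conjugate_by_letter_inv:
  assumes "word_eq Rel [x, s] [s, y]"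
  shows "word_eq Rel [y, letter_inv s] [letter_inv s, x]"
proof -
  have "word_eq Rel [y, letter_inv s] ([letter_inv s] @ [s, y] @ [letter_inv s])"
    using word_eq.we_sym[OF word_eq_cancel_letter_inv'[of Rel "[]" s "[y, letter_inv s]"]] by simp
  also have "word_eq Rel \<dots> ([letter_inv s] @ [x, s] @ [letter_inv s])"
    using assms by (rule word_eq_in_context[OF word_eq.we_sym])
  also have "word_eq Rel \<dots> [letter_inv s, x]"
    using word_eq_cancel_letter_inv[of Rel "[letter_inv s, x]" s "[]"] by simp
  finally show ?thesis .
qed

lemma word_eq_conjugate_map:
  assumes "\<forall>c \<in> set w. word_eq Rel [f c, s] [s, g c]"
  shows "word_eq Rel (map f w @ [s]) (s # map g w)"
  using assms
proof (induction w)
  case (Cons c w)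
  then have "word_eq Rel ([f c] @ map f w @ [s]) ([f c] @ s # map g w)"
    by (intro word_eq_append_left) simp
  also have "\<dots> = [f c, s] @ map g w"
    by simp
  also have "word_eq Rel \<dots> ([s, g c] @ map g w)"
    using Cons.prems by (intro word_eq_append_right) simp
  finally show ?case
    by simp
qed (simp add: word_eq.we_refl)

definition letters_commute :: "('g \<times> bool) list set \<Rightarrow> 'g \<times> bool \<Rightarrow> 'g \<times> bool \<Rightarrow> bool" where
  "letters_commute Rel l m \<longleftrightarrow> word_eq Rel [l, m] [m, l]"

lemma letters_commute_sym: "letters_commute Rel l m \<Longrightarrow> letters_commute Rel m l"
  unfolding letters_commute_def by (rule word_eq.we_sym)

lemma letters_commute_letter_inv:
  assumes "letters_commute Rel l m"
  shows "letters_commute Rel (letter_inv l) m" and "letters_commute Rel l (letter_inv m)"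
  using word_eq_conjugate_letter_inv[of Rel l m l] word_eq_conjugate_by_letter_inv[of Rel l m l] assms
  unfolding letters_commute_def by simp_all

lemma commutator_letters_commute:
  assumes "commutator a b \<in> Rel"
  shows "letters_commute Rel (a, e) (b, e')"
proof -
  have "word_eq Rel ([(a, False), (b, False)] @ word_inv [(b, False), (a, False)]) []"
    using relator_word_eq_Nil[OF assms] by (simp add: commutator_def)
  then have c: "letters_commute Rel (a, False) (b, False)"
    unfolding letters_commute_def word_eq_iff_append_word_inv[of Rel "[(a, False), (b, False)]"] .
  then have "letters_commute Rel (a, True) (b, False)" "letters_commute Rel (a, False) (b, True)"
    "letters_commute Rel (a, True) (b, True)"
    using letters_commute_letter_inv[OF c] letters_commute_letter_inv(2)[OF letters_commute_letter_inv(1)[OF c]]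
    by simp_all
  with c show ?thesis
    by (cases e; cases e') simp_all
qed

lemma word_eq_commute_words:
  assumes "\<forall>l \<in> set u. \<forall>m \<in> set v. letters_commute Rel l m"
  shows "word_eq Rel (u @ v) (v @ u)"
  using assms
proof (induction u)
  case (Cons l u)
  then have "word_eq Rel ([l] @ u @ v) ([l] @ v @ u)"
    by (intro word_eq_append_left) simp
  also have "\<dots> = ([l] @ v) @ u"
    by simp
  also have "word_eq Rel \<dots> ((v @ [l]) @ u)"
  proof (rule word_eq_append_right, rule word_eq.we_sym)
    have "\<forall>m \<in> set v. letters_commute Rel m l"
    proof
      fix m
      assume "m \<in> set v"
      with Cons.prems have "letters_commute Rel l m"
        by simp
      then show "letters_commute Rel m l"
        by (rule letters_commute_sym)
    qed
    then show "word_eq Rel (v @ [l]) ([l] @ v)"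
      using word_eq_conjugate_map[of v Rel id l id] by (simp add: letters_commute_def)
  qed
  finally show ?case
    by simp
qed (simp add: word_eq.we_refl)

lemma word_eq_map_split:
  assumes "\<forall>c \<in> set w. word_eq Rel [f c] [g c, h c]"
    and "\<forall>c \<in> set w. \<forall>c' \<in> set w. letters_commute Rel (h c) (g c')"
  shows "word_eq Rel (map f w) (map g w @ map h w)"
  using assms
proof (induction w)
  case (Cons c w)
  then have "word_eq Rel ([f c] @ map f w) ([g c, h c] @ map g w @ map h w)"
    by (intro word_eq_append) auto
  also have "\<dots> = [g c] @ ([h c] @ map g w) @ map h w"
    by simp
  also have "word_eq Rel \<dots> ([g c] @ (map g w @ [h c]) @ map h w)"
    using Cons.prems(2) by (intro word_eq_in_context word_eq_commute_words) auto
  finally show ?case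
    by simp
qed (simp add: word_eq.we_refl)

lemma relator_split_letter:
  assumes "[(a, False), letter_inv m, letter_inv l] \<in> Rel" and "letters_commute Rel l m"
  shows "word_eq Rel [(a, e)] (if e then [letter_inv l, letter_inv m] else [l, m])"
proof -
  have pos: "word_eq Rel [(a, False)] [l, m]"
    using relator_word_eq_Nil[OF assms(1)] word_eq_iff_append_word_inv[of Rel "[(a, False)]" "[l, m]"]
    by simp
  have "word_eq Rel [(a, True)] [letter_inv m, letter_inv l]"
    using word_eq_word_inv[OF pos] by simp
  also have "word_eq Rel \<dots> [letter_inv l, letter_inv m]"
    using letters_commute_letter_inv(2)[OF letters_commute_letter_inv(1)[OF assms(2)]]
    unfolding letters_commute_def by (rule word_eq.we_sym)
  finally show ?thesis
    using pos by simp
qed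

definition detour :: "'g \<times> bool \<Rightarrow> 'g \<times> bool \<Rightarrow> ('g \<times> bool) list \<Rightarrow> ('g \<times> bool) list \<Rightarrow>
    nat \<Rightarrow> ('g \<times> bool) list"
  where "detour t s W C n = W @ replicate n (letter_inv t) @ concat (replicate n (s # C)) @ word_inv W"

text \<open>The second hypothesis says \<open>W (s C) W\<^sup>-\<^sup>1 = s\<close>; as \<open>t\<close> commutes with \<open>W\<close>,
  \<open>t\<^sup>n W t\<^sup>-\<^sup>n (s C)\<^sup>n W\<^sup>-\<^sup>1 = W (s C)\<^sup>n W\<^sup>-\<^sup>1 = s\<^sup>n\<close>.\<close>

lemma word_eq_detour:
  assumes "\<forall>l \<in> set W. letters_commute Rel t l" and "word_eq Rel (W @ s # C) (s # W)"
  shows "word_eq Rel (replicate n t @ detour t s W C n) (replicate n s)"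
proof -
  define L where "L = concat (replicate n (s # C))"
  have L: "word_eq Rel (W @ concat (replicate k (s # C))) (replicate k s @ W)" for k
  proof (induction k)
    case (Suc k)
    have "word_eq Rel ((W @ s # C) @ concat (replicate k (s # C))) ((s # W) @ concat (replicate k (s # C)))"
      using assms(2) by (rule word_eq_append_right)
    also have "word_eq Rel \<dots> ([s] @ replicate k s @ W)"
      using Suc.IH word_eq_append_left[of Rel _ _ "[s]"] by simp
    finally show ?case
      by simp
  qed (simp add: word_eq.we_refl)
  have "word_eq Rel ((replicate n t @ W) @ replicate n (letter_inv t) @ L @ word_inv W)
      ((W @ replicate n t) @ replicate n (letter_inv t) @ L @ word_inv W)"
    using assms(1) by (intro word_eq_append_right word_eq_commute_words) simp
  also have "word_eq Rel \<dots> (W @ [] @ L @ word_inv W)"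
    using word_eq_in_context[OF word_eq_append_word_inv[of Rel "replicate n t"], of W "L @ word_inv W"]
    by simp
  also have "word_eq Rel \<dots> ((replicate n s @ W) @ word_inv W)"
    using word_eq_append_right[OF L[of n]] by (simp add: L_def)
  also have "word_eq Rel \<dots> (replicate n s @ [])"
    using word_eq_append_left[OF word_eq_append_word_inv] by simp
  finally show ?thesis
    by (simp add: detour_def L_def)
qed

lemma length_detour:
  "length (detour t s W C n) = 2 * length W + n + n * (1 + length C)"
  by (simp add: detour_def length_concat sum_list_replicate)

lemma fst_set_detour:
  "fst ` set (detour t s W C n) \<subseteq> fst ` set W \<union> {fst t, fst s} \<union> fst ` set C"
proof -
  have "set (concat (replicate n (s # C))) \<subseteq> insert s (set C)"
    by (induction n) auto
  then have "set (detour t s W C n) \<subseteq> set W \<union> letter_inv ` set W \<union> {letter_inv t, s} \<union> set C"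
    unfolding detour_def by auto
  then have "fst ` set (detour t s W C n)
      \<subseteq> fst ` (set W \<union> letter_inv ` set W \<union> {letter_inv t, s} \<union> set C)"
    by (rule image_mono)
  then show ?thesis
    by (simp add: image_Un)
qed

lemma take_detour:
  obtains (head) "take k (detour t s W C n) = take k W"
  | (middle) j where
      "take k (detour t s W C n) = W @ take j (replicate n (letter_inv t) @ concat (replicate n (s # C)))"
  | (tail) j where "take k (detour t s W C n) =
      W @ replicate n (letter_inv t) @ concat (replicate n (s # C)) @ take j (word_inv W)"
proof -
  define L where "L = replicate n (letter_inv t) @ concat (replicate n (s # C))"
  consider "k \<le> length W" | "length W < k" "k \<le> length W + length L" | "length W + length L < k"
    by linarith
  then show thesis
  proof cases
    case 1
    then show thesis
      by (intro head) (simp add: detour_def)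
  next
    case 2
    then show thesis
      by (intro middle[of "k - length W"]) (simp add: detour_def L_def)
  next
    case 3
    then show thesis
      by (intro tail[of "k - (length W + length L)"]) (simp add: detour_def L_def add.assoc)
  qed
qed

section \<open>Homomorphic images bounding word length\<close>

definition exp_sum :: "'g \<Rightarrow> ('g \<times> bool) list \<Rightarrow> int" where
  "exp_sum g w = (\<Sum>l \<leftarrow> w. if fst l = g then if snd l then -1 else 1 else 0)"

lemma exp_sum_Nil [simp]: "exp_sum g [] = 0"
  and exp_sum_Cons [simp]:
    "exp_sum g (l # w) = (if fst l = g then if snd l then -1 else 1 else 0) + exp_sum g w"
  and exp_sum_append [simp]: "exp_sum g (u @ v) = exp_sum g u + exp_sum g v"
  by (simp_all add: exp_sum_def)

lemma exp_sum_concat_replicate: "exp_sum g (concat (replicate n w)) = int n * exp_sum g w"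
  by (induction n) (simp_all add: algebra_simps)

lemma exp_sum_replicate: "exp_sum g (replicate n l) = int n * exp_sum g [l]"
  using exp_sum_concat_replicate[of g n "[l]"] by (simp add: concat_replicate_trivial)

lemma exp_sum_eq_0: "g \<notin> fst ` set w \<Longrightarrow> exp_sum g w = 0"
  by (induction w) auto

lemma exp_sum_word_eq:
  assumes "\<forall>r \<in> Rel. exp_sum g r = 0" and "word_eq Rel u v"
  shows "exp_sum g u = exp_sum g v"
  using assms(2) by induction (use assms(1) in auto)

lemma free_reduce_concat_map_word_eq:
  assumes "\<And>l. \<phi> (letter_inv l) = word_inv (\<phi> l)"
    and "\<forall>r \<in> Rel. free_reduce (concat (map \<phi> r)) = []" and "word_eq Rel u v"
  shows "free_reduce (concat (map \<phi> u)) = free_reduce (concat (map \<phi> v))"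
  using assms(3)
proof induction
  case (we_cancel u a b v)
  have "concat (map \<phi> [(a, b), (a, \<not> b)]) = \<phi> (a, b) @ word_inv (\<phi> (a, b))"
    using assms(1)[of "(a, b)"] by simp
  then show ?case
    using free_reduce_Nil_infix[OF free_reduce_append_word_inv, of "concat (map \<phi> u)" "\<phi> (a, b)"]
    by simp
next
  case (we_rel r u v)
  then show ?case
    using assms(2) by (simp add: free_reduce_Nil_infix)
qed simp_all

text \<open>Induces a homomorphism from \<open>G\<^sub>2\<close> to the free group on \<open>{0..<p}\<close>: all relators
  of \<open>G\<^sub>2\<close> are mapped to freely trivial words.\<close>

fun abz_proj :: "'a gen2 \<times> bool \<Rightarrow> (nat \<times> bool) list" where
  "abz_proj (Ag i, b) = [(i, b)]"
| "abz_proj (Bg i, b) = [(i, b)]"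
| "abz_proj (Zg i, b) = [(i, b)]"
| "abz_proj _ = []"

lemma abz_proj_letter_inv: "abz_proj (letter_inv l) = word_inv (abz_proj l)"
  by (cases l rule: abz_proj.cases) simp_all

lemma abz_proj_apfst_A [simp]: "concat (map (abz_proj \<circ> apfst Ag) w) = w"
  and abz_proj_apfst_B [simp]: "concat (map (abz_proj \<circ> apfst Bg) w) = w"
  by (induction w) auto

lemma exp_sum_commutator [simp]: "exp_sum g (commutator a b) = 0"
  by (simp add: commutator_def)

lemma abz_proj_commutator:
  "abz_proj (a, False) = [] \<Longrightarrow> free_reduce (concat (map abz_proj (commutator a b))) = []"
  by (cases a rule: gen2.exhaust; cases b rule: gen2.exhaust) (simp_all add: commutator_def)

text \<open>Each summand is the length of the image of \<open>w\<close> under a homomorphism to \<open>\<int>\<close> or to a free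
  group that maps every generator to a word of length at most one, so it bounds the word length
  in \<open>G\<^sub>2\<close> from below.\<close>

definition proj_norm :: "('a gen2 \<times> bool) list \<Rightarrow> nat" where
  "proj_norm w = nat \<bar>exp_sum S1g w\<bar> + nat \<bar>exp_sum S2g w\<bar> + length (free_reduce (concat (map abz_proj w)))"

lemma proj_norm_le_length: "proj_norm w \<le> length w"
proof (induction w)
  case (Cons l w)
  have "length (free_reduce (abz_proj l @ concat (map abz_proj w)))
      \<le> length (abz_proj l) + length (free_reduce (concat (map abz_proj w)))"
    by (simp add: free_reduce_append length_foldr_cancel_cons)
  moreover have "(if fst l = S1g then 1 else 0) + (if fst l = S2g then 1 else 0) + length (abz_proj l) \<le> (1::nat)"
    by (cases l rule: abz_proj.cases) auto
  ultimately show ?case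
    using Cons.IH unfolding proj_norm_def by (auto split: if_splits)
qed (simp add: proj_norm_def)

section \<open>The group \<open>G\<^sub>2\<close> and the path\<close>

context
  fixes H :: "('a, 'b) monoid_scheme" and T :: "'a set" and d :: "nat \<Rightarrow> 'a" and p :: nat
begin

abbreviation R\<^sub>2 :: "('a gen2 \<times> bool) list set" where
  "R\<^sub>2 \<equiv> rels2 H T d p"

lemma letters_commute_X_Y: "i < p \<Longrightarrow> j < p \<Longrightarrow> letters_commute R\<^sub>2 (Xg i, e) (Yg j, e')"
  by (rule commutator_letters_commute) (unfold rels2_def, blast)

lemma letters_commute_X_Z: "i < p \<Longrightarrow> j < p \<Longrightarrow> letters_commute R\<^sub>2 (Xg i, e) (Zg j, e')"
  by (rule commutator_letters_commute) (unfold rels2_def, blast)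

lemma letters_commute_Y_Z: "i < p \<Longrightarrow> j < p \<Longrightarrow> letters_commute R\<^sub>2 (Yg i, e) (Zg j, e')"
  by (rule commutator_letters_commute) (unfold rels2_def, blast)

lemma letters_commute_S1:
  "valid2 T p g \<Longrightarrow> g \<noteq> S1g \<Longrightarrow> g \<noteq> S2g \<Longrightarrow> letters_commute R\<^sub>2 (S1g, e) (g, e')"
  by (rule commutator_letters_commute) (unfold rels2_def, blast)

lemma word_eq_A_split:
  assumes "i < p"
  shows "word_eq R\<^sub>2 [(Ag i, e)] [(Xg i, e), (Zg i, e)]"
proof -
  have "[(Ag i, False), (Zg i, True), (Xg i, True)] \<in> R\<^sub>2"
    using assms unfolding rels2_def by blast
  then show ?thesis
    using relator_split_letter[of "Ag i" "(Zg i, False)" "(Xg i, False)" R\<^sub>2 e]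
      letters_commute_X_Z[OF assms assms] by (cases e) simp_all
qed

lemma word_eq_B_split:
  assumes "i < p"
  shows "word_eq R\<^sub>2 [(Bg i, e)] [(Yg i, e), (Zg i, e)]"
proof -
  have "[(Bg i, False), (Zg i, True), (Yg i, True)] \<in> R\<^sub>2"
    using assms unfolding rels2_def by blast
  then show ?thesis
    using relator_split_letter[of "Bg i" "(Zg i, False)" "(Yg i, False)" R\<^sub>2 e]
      letters_commute_Y_Z[OF assms assms] by (cases e) simp_all
qed

lemma word_eq_D_split:
  assumes "i < p"
  shows "word_eq R\<^sub>2 [(Tg (d i), e)] [(Xg i, e), (Yg i, \<not> e)]"
proof -
  have "[(Tg (d i), False), (Yg i, False), (Xg i, True)] \<in> R\<^sub>2"
    using assms unfolding rels2_def by blast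
  then show ?thesis
    using relator_split_letter[of "Tg (d i)" "(Yg i, True)" "(Xg i, False)" R\<^sub>2 e]
      letters_commute_X_Y[OF assms assms] by (cases e) simp_all
qed

lemma word_eq_A_S2: "i < p \<Longrightarrow> word_eq R\<^sub>2 [(Ag i, e), (S2g, False)] [(S2g, False), (Bg i, e)]"
proof -
  assume "i < p"
  then have "word_eq R\<^sub>2 ([(S2g, True)] @ [(Ag i, False), (S2g, False), (Bg i, True)]) []"
    by (intro relator_word_eq_Nil) (unfold rels2_def append_Cons append_Nil, blast)
  then have "word_eq R\<^sub>2 ([(Ag i, False), (S2g, False)] @ word_inv [(S2g, False), (Bg i, False)]) []"
    using word_eq_Nil_rotate by fastforce
  then have pos: "word_eq R\<^sub>2 [(Ag i, False), (S2g, False)] [(S2g, False), (Bg i, False)]"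
    by (simp only: word_eq_iff_append_word_inv[of R\<^sub>2 "[(Ag i, False), (S2g, False)]"])
  then show ?thesis
    using word_eq_conjugate_letter_inv[OF pos] by (cases e) simp_all
qed

lemma word_eq_B_S2_inv: "i < p \<Longrightarrow> word_eq R\<^sub>2 [(Bg i, e), (S2g, True)] [(S2g, True), (Ag i, e)]"
  using word_eq_conjugate_by_letter_inv[OF word_eq_A_S2] by simp

lemma word_eq_map_A_split:
  assumes "\<forall>c \<in> set w. fst c < p"
  shows "word_eq R\<^sub>2 (map (apfst Ag) w) (map (apfst Xg) w @ map (apfst Zg) w)"
proof (rule word_eq_map_split)
  show "\<forall>c \<in> set w. word_eq R\<^sub>2 [apfst Ag c] [apfst Xg c, apfst Zg c]"
    using assms by (auto simp: word_eq_A_split)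
  show "\<forall>c \<in> set w. \<forall>c' \<in> set w. letters_commute R\<^sub>2 (apfst Zg c) (apfst Xg c')"
    using assms by (force intro!: letters_commute_sym[OF letters_commute_X_Z])
qed

lemma word_eq_map_B_split:
  assumes "\<forall>c \<in> set w. fst c < p"
  shows "word_eq R\<^sub>2 (map (apfst Bg) w) (map (apfst Yg) w @ map (apfst Zg) w)"
proof (rule word_eq_map_split)
  show "\<forall>c \<in> set w. word_eq R\<^sub>2 [apfst Bg c] [apfst Yg c, apfst Zg c]"
    using assms by (auto simp: word_eq_B_split)
  show "\<forall>c \<in> set w. \<forall>c' \<in> set w. letters_commute R\<^sub>2 (apfst Zg c) (apfst Yg c')"
    using assms by (force intro!: letters_commute_sym[OF letters_commute_Y_Z])
qed

lemma word_eq_map_D_split: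
  assumes "\<forall>c \<in> set w. fst c < p"
  shows "word_eq R\<^sub>2 (map (apfst (Tg \<circ> d)) w) (map (apfst Xg) w @ map (letter_inv \<circ> apfst Yg) w)"
proof (rule word_eq_map_split)
  show "\<forall>c \<in> set w. word_eq R\<^sub>2 [apfst (Tg \<circ> d) c] [apfst Xg c, (letter_inv \<circ> apfst Yg) c]"
    using assms by (auto simp: word_eq_D_split)
  show "\<forall>c \<in> set w. \<forall>c' \<in> set w. letters_commute R\<^sub>2 ((letter_inv \<circ> apfst Yg) c) (apfst Xg c')"
    using assms by (force intro!: letters_commute_sym[OF letters_commute_X_Y])
qed

text \<open>For a palindromic index word \<open>w\<close>, the relations \<open>d\<^sub>i = x\<^sub>i y\<^sub>i\<^sup>-\<^sup>1\<close> give
  \<open>d(w) = x(w) y(w)\<^sup>-\<^sup>1\<close>, hence \<open>b(w) d(w) = y(w) z(w) x(w) y(w)\<^sup>-\<^sup>1 = a(w)\<close>.\<close>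

lemma word_eq_map_B_D:
  assumes "\<forall>c \<in> set w. fst c < p" and "rev w = w"
  shows "word_eq R\<^sub>2 (map (apfst Bg) w @ map (apfst (Tg \<circ> d)) w) (map (apfst Ag) w)"
proof -
  define Xs Ys Zs :: "('a gen2 \<times> bool) list"
    where "Xs = map (apfst Xg) w" and "Ys = map (apfst Yg) w" and "Zs = map (apfst Zg) w"
  have "map (letter_inv \<circ> apfst Yg) w = word_inv Ys"
    using assms(2) by (metis Ys_def rev_map word_inv_def map_map)
  then have "word_eq R\<^sub>2 (map (apfst Bg) w @ map (apfst (Tg \<circ> d)) w) ((Ys @ Zs) @ Xs @ word_inv Ys)"
    using word_eq_map_B_split[OF assms(1)] word_eq_map_D_split[OF assms(1)]
    unfolding Xs_def Ys_def Zs_def by (intro word_eq_append) simp_all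
  also have "\<dots> = (Ys @ Zs @ Xs) @ word_inv Ys"
    by simp
  also have "word_eq R\<^sub>2 \<dots> (((Zs @ Xs) @ Ys) @ word_inv Ys)"
    using assms(1) unfolding Xs_def Ys_def Zs_def
    by (intro word_eq_append_right word_eq_commute_words)
      (force intro!: letters_commute_Y_Z letters_commute_sym[OF letters_commute_X_Y])
  also have "word_eq R\<^sub>2 \<dots> (Zs @ Xs)"
    using word_eq_append_left[where x = "Zs @ Xs", OF word_eq_append_word_inv[of R\<^sub>2 Ys]] by simp
  also have "word_eq R\<^sub>2 \<dots> (Xs @ Zs)"
    using assms(1) unfolding Xs_def Zs_def
    by (intro word_eq_commute_words) (force intro!: letters_commute_sym[OF letters_commute_X_Z])
  also have "word_eq R\<^sub>2 \<dots> (map (apfst Ag) w)"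
    unfolding Xs_def Zs_def by (rule word_eq.we_sym[OF word_eq_map_A_split[OF assms(1)]])
  finally show ?thesis .
qed

lemma word_eq_A_conjugate_S2:
  assumes "\<forall>c \<in> set w. fst c < p" and "rev w = w" and "word_eq R\<^sub>2 V (map (apfst (Tg \<circ> d)) w)"
  shows "word_eq R\<^sub>2 (map (apfst Ag) w @ (S2g, False) # V) ((S2g, False) # map (apfst Ag) w)"
proof -
  have "word_eq R\<^sub>2 ((map (apfst Ag) w @ [(S2g, False)]) @ V) (((S2g, False) # map (apfst Bg) w) @ V)"
    using assms(1) word_eq_A_S2 by (intro word_eq_append_right word_eq_conjugate_map) auto
  also have "word_eq R\<^sub>2 \<dots> ([(S2g, False)] @ map (apfst Bg) w @ map (apfst (Tg \<circ> d)) w)"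
    using word_eq_append_left[where x = "(S2g, False) # map (apfst Bg) w", OF assms(3)] by simp
  also have "word_eq R\<^sub>2 \<dots> ([(S2g, False)] @ map (apfst Ag) w)"
    using assms(1,2) by (intro word_eq_append_left word_eq_map_B_D)
  finally show ?thesis
    by simp
qed

lemma word_eq_B_conjugate_S2_inv:
  assumes "\<forall>c \<in> set w. fst c < p" and "rev w = w" and "word_eq R\<^sub>2 V (map (apfst (Tg \<circ> d)) w)"
  shows "word_eq R\<^sub>2 (map (apfst Bg) w @ (S2g, True) # word_inv V) ((S2g, True) # map (apfst Bg) w)"
proof -
  let ?A = "map (apfst Ag) w" and ?B = "map (apfst Bg) w" and ?D = "map (apfst (Tg \<circ> d)) w"
  have "word_eq R\<^sub>2 (?B @ word_inv (?A @ word_inv ?D)) (?A @ word_inv ?A)"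
    using word_eq_append_right[OF word_eq_map_B_D[OF assms(1,2)], of "word_inv ?A"] by simp
  also have "word_eq R\<^sub>2 \<dots> []"
    by (rule word_eq_append_word_inv)
  finally have BD: "word_eq R\<^sub>2 ?B (?A @ word_inv ?D)"
    using word_eq_iff_append_word_inv[of R\<^sub>2 ?B "?A @ word_inv ?D"] by simp
  have "word_eq R\<^sub>2 ((?B @ [(S2g, True)]) @ word_inv V) (((S2g, True) # ?A) @ word_inv V)"
    using assms(1) word_eq_B_S2_inv by (intro word_eq_append_right word_eq_conjugate_map) auto
  also have "word_eq R\<^sub>2 \<dots> ([(S2g, True)] @ ?A @ word_inv ?D)"
    using word_eq_append_left[where x = "(S2g, True) # ?A", OF word_eq_word_inv[OF assms(3)]] by simp
  also have "word_eq R\<^sub>2 \<dots> ([(S2g, True)] @ ?B)"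
    using word_eq.we_sym[OF BD] by (rule word_eq_append_left)
  finally show ?thesis
    by simp
qed

lemma word_eq_s1_s2_detour:
  fixes e e' :: bool
  assumes "\<forall>c \<in> set w. fst c < p" and "rev w = w"
    and "word_eq R\<^sub>2 V (map (apfst (Tg \<circ> d)) w)"
  defines "W \<equiv> if e' then map (apfst Bg) w else map (apfst Ag) w"
    and "C \<equiv> if e' then word_inv V else V"
  shows "word_eq R\<^sub>2 (replicate n (S1g, e) @ detour (S1g, e) (S2g, e') W C n) (replicate n (S2g, e'))"
proof (rule word_eq_detour)
  show "\<forall>l \<in> set W. letters_commute R\<^sub>2 (S1g, e) l"
    using assms(1) letters_commute_S1 unfolding W_def by auto
  show "word_eq R\<^sub>2 (W @ (S2g, e') # C) ((S2g, e') # W)"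
    using word_eq_A_conjugate_S2[OF assms(1-3)] word_eq_B_conjugate_S2_inv[OF assms(1-3)]
    unfolding W_def C_def by (cases e') simp_all
qed

lemma rels2_proj_trivial:
  assumes "r \<in> R\<^sub>2"
  shows "exp_sum S1g r = 0" and "exp_sum S2g r = 0" and "free_reduce (concat (map abz_proj r)) = []"
proof -
  from assms have "exp_sum S1g r = 0 \<and> exp_sum S2g r = 0 \<and> free_reduce (concat (map abz_proj r)) = []"
    unfolding rels2_def
  proof (elim UnE)
    assume "r \<in> {map (\<lambda>(t, b). (Tg t, b)) w | w. w \<in> lists (T \<times> UNIV) \<and> word_eval H w = \<one>\<^bsub>H\<^esub>}"
    then obtain w where "r = map (\<lambda>(t, b). (Tg t, b)) w"
      by blast
    then have "\<forall>l \<in> set r. abz_proj l = [] \<and> fst l \<noteq> S1g \<and> fst l \<noteq> S2g"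
      by auto
    then have "S1g \<notin> fst ` set r" and "S2g \<notin> fst ` set r" and "concat (map abz_proj r) = []"
      by auto
    then show ?thesis
      by (simp add: exp_sum_eq_0 del: concat_eq_Nil_conv)
  qed (auto simp: abz_proj_commutator)
  then show "exp_sum S1g r = 0" and "exp_sum S2g r = 0" and "free_reduce (concat (map abz_proj r)) = []"
    by simp_all
qed

lemma proj_norm_word_eq: "word_eq R\<^sub>2 u v \<Longrightarrow> proj_norm u = proj_norm v"
  unfolding proj_norm_def
  using exp_sum_word_eq[of R\<^sub>2 S1g u v] exp_sum_word_eq[of R\<^sub>2 S2g u v]
    free_reduce_concat_map_word_eq[of abz_proj R\<^sub>2 u v]
  by (simp add: rels2_proj_trivial abz_proj_letter_inv)

lemma proj_norm_le_len2:
  assumes "\<forall>l \<in> set w. valid2 T p (fst l)"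
  shows "proj_norm w \<le> len2 H T d p w"
proof -
  let ?P = "\<lambda>n. \<exists>w'. (\<forall>l \<in> set w'. valid2 T p (fst l)) \<and> length w' = n \<and> word_eq R\<^sub>2 w w'"
  have "?P (Least ?P)"
    using assms by (intro LeastI[of ?P "length w"]) (auto intro: word_eq.we_refl)
  then obtain w' where "length w' = len2 H T d p w" and "word_eq R\<^sub>2 w w'"
    unfolding len2_def by blast
  then show ?thesis
    using proj_norm_word_eq proj_norm_le_length by metis
qed

lemma len2_detour_prefix:
  fixes e e' :: bool
  defines "t \<equiv> (S1g, e)" and "s \<equiv> (S2g, e')"
  assumes valid: "\<forall>l \<in> set (replicate n t @ detour t s W C n). valid2 T p (fst l)"
    and W: "S1g \<notin> fst ` set W" "S2g \<notin> fst ` set W"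
      "freely_reduced (concat (map abz_proj W))" "n \<le> length (concat (map abz_proj W))"
    and C: "S2g \<notin> fst ` set C" "concat (map abz_proj C) = []"
  shows "n \<le> len2 H T d p (replicate n t @ take k (detour t s W C n))"
proof -
  let ?P = "replicate n t @ take k (detour t s W C n)"
  have "n \<le> proj_norm ?P"
  proof (cases rule: take_detour[of k t s W C n])
    case head
    have "exp_sum S1g (take k W) = 0"
      using W(1) in_set_takeD by (fastforce intro: exp_sum_eq_0)
    then show ?thesis
      unfolding head by (simp add: proj_norm_def exp_sum_replicate t_def)
  next
    case (middle j)
    have "set (concat (replicate n (s # C))) \<subseteq> insert s (set C)"
      by (induction n) auto
    then have "\<forall>l \<in> set (take j (replicate n (letter_inv t) @ concat (replicate n (s # C)))). abz_proj l = []"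
      using C(2) by (auto simp: t_def s_def dest!: in_set_takeD)
    then have "concat (map abz_proj ?P) = concat (map abz_proj W)"
      unfolding middle by (simp add: t_def)
    then show ?thesis
      using W(3,4) by (simp add: proj_norm_def free_reduce_freely_reduced)
  next
    case (tail j)
    have "fst ` set (take j (word_inv W)) \<subseteq> fst ` set W"
      using image_mono[OF set_take_subset[of j "word_inv W"], of fst] by simp
    then have "exp_sum S2g W = 0" and "exp_sum S2g (take j (word_inv W)) = 0"
      using W(2) by (auto intro!: exp_sum_eq_0)
    moreover have "exp_sum S2g (concat (replicate n (s # C))) = int n * exp_sum S2g [s]"
      using C(1) exp_sum_eq_0[of S2g C] by (simp add: exp_sum_concat_replicate s_def)
    ultimately have "\<bar>exp_sum S2g ?P\<bar> = int n"
      unfolding tail by (simp add: exp_sum_replicate t_def s_def)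
    then show ?thesis
      by (simp add: proj_norm_def)
  qed
  also have "\<dots> \<le> len2 H T d p ?P"
  proof (rule proj_norm_le_len2)
    have "set ?P \<subseteq> set (replicate n t @ detour t s W C n)"
      using set_take_subset by fastforce
    then show "\<forall>l \<in> set ?P. valid2 T p (fst l)"
      using valid by blast
  qed
  finally show ?thesis .
qed

lemma word_eq_T_words:
  assumes "group H" and "T \<subseteq> carrier H"
    and "u \<in> lists (T \<times> UNIV)" and "v \<in> lists (T \<times> UNIV)" and "word_eval H u = word_eval H v"
  shows "word_eq R\<^sub>2 (map (apfst Tg) u) (map (apfst Tg) v)"
proof -
  interpret group H by fact
  have u: "fst ` set u \<subseteq> carrier H" and v: "fst ` set v \<subseteq> carrier H"
    using assms(2-4) by fastforce+
  have "u @ word_inv v \<in> lists (T \<times> UNIV)"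
    using assms(3,4) by (fastforce simp: letter_inv_def)
  moreover have "word_eval H (u @ word_inv v) = \<one>\<^bsub>H\<^esub>"
    using u v assms(5) word_eval_closed[OF v] by (simp add: word_eval_append word_eval_word_inv)
  moreover have "map (\<lambda>(t, b). (Tg t, b)) y = map (apfst Tg) y" for y :: "('a \<times> bool) list"
    by (induction y) auto
  ultimately have "map (apfst Tg) (u @ word_inv v) \<in> R\<^sub>2"
    unfolding rels2_def by (intro UnI1) (metis (mono_tags, lifting) mem_Collect_eq)
  then have "word_eq R\<^sub>2 (map (apfst Tg) u @ word_inv (map (apfst Tg) v)) []"
    by (simp add: relator_word_eq_Nil word_inv_map_apfst)
  then show ?thesis
    by (simp only: word_eq_iff_append_word_inv[of R\<^sub>2 "map (apfst Tg) u"])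
qed

lemma palindromic_index_word:
  assumes "group H" and "T \<subseteq> carrier H" and "d ` {..<p} \<subseteq> T" and "free_basis H d p"
    and "palindromic H (d ` {..<p}) u"
  obtains w v where "\<forall>c \<in> set w. fst c < p" and "rev w = w" and "freely_reduced w"
    and "length w = wlen H (d ` {..<p}) u"
    and "v \<in> lists (T \<times> UNIV)" and "length v = wlen H T u"
    and "word_eq R\<^sub>2 (map (apfst Tg) v) (map (apfst (Tg \<circ> d)) w)"
proof -
  obtain x where x: "x \<in> lists (d ` {..<p} \<times> UNIV)" "freely_reduced x" "word_eval H x = u" "rev x = x"
    using assms(5) unfolding palindromic_def by blast
  have xT: "x \<in> lists (T \<times> UNIV)"
    using x(1) assms(3) by fastforce
  define w where "w = map (apfst (inv_into {..<p} d)) x"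
  have x_w: "x = map (apfst d) w"
    using x(1) unfolding w_def by (induction x) (auto simp: f_inv_into_f)
  have "\<forall>c \<in> set w. fst c < p"
    using x(1) unfolding w_def by (fastforce intro: inv_into_into[of _ d "{..<p}", simplified])
  moreover have "rev w = w"
    using x(4) unfolding w_def by (metis rev_map)
  moreover have "freely_reduced w"
    using x(2) x_w freely_reduced_map_apfstD by blast
  moreover have "length w = wlen H (d ` {..<p}) u"
    using free_basis_wlen_freely_reduced[OF assms(1) _ assms(4) x(1,2)] assms(2,3) x(3) x_w by auto
  moreover obtain v where v: "v \<in> lists (T \<times> UNIV)" "length v = wlen H T u" "word_eval H v = u"
    using wlen_witness[OF xT x(3)] by blast
  moreover have "word_eq R\<^sub>2 (map (apfst Tg) v) (map (apfst (Tg \<circ> d)) w)"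
    using word_eq_T_words[OF assms(1,2) v(1) xT] v(3) x(3) x_w by (simp add: comp_def apfst_compose)
  ultimately show thesis
    using that by blast
qed

lemma s1_s2_path_of_index_word:
  fixes e e' :: bool
  assumes w: "\<forall>c \<in> set w. fst c < p" "rev w = w" "freely_reduced w" "n \<le> length w"
    and v: "v \<in> lists (T \<times> UNIV)" "word_eq R\<^sub>2 (map (apfst Tg) v) (map (apfst (Tg \<circ> d)) w)"
  obtains ls where "\<forall>l \<in> set ls. valid2 T p (fst l)"
    and "word_eq R\<^sub>2 (replicate n (S1g, e) @ ls) (replicate n (S2g, e'))"
    and "\<forall>k \<le> length ls. n \<le> len2 H T d p (replicate n (S1g, e) @ take k ls)"
    and "length ls = 2 * length w + n + n * (1 + length v)"
proof -
  define W :: "('a gen2 \<times> bool) list" where "W = (if e' then map (apfst Bg) w else map (apfst Ag) w)"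
  define C where "C = (if e' then word_inv (map (apfst Tg) v) else map (apfst Tg) v)"
  define ls where "ls = detour (S1g, e) (S2g, e') W C n"
  have W_letters: "fst ` set W \<subseteq> {g. valid2 T p g \<and> g \<noteq> S1g \<and> g \<noteq> S2g}"
    using w(1) unfolding W_def by auto
  have C_letters: "fst ` set C \<subseteq> Tg ` T"
    using v(1) unfolding C_def by (auto simp: image_image)
  have valid: "\<forall>l \<in> set (replicate n (S1g, e) @ ls). valid2 T p (fst l)"
    using fst_set_detour[of "(S1g, e)" "(S2g, e')" W C n] W_letters C_letters unfolding ls_def by fastforce
  have "concat (map abz_proj W) = w"
    by (simp add: W_def)
  moreover have "concat (map abz_proj C) = []"
    using C_letters by (fastforce simp: abz_proj.elims)
  ultimately have "n \<le> len2 H T d p (replicate n (S1g, e) @ take k ls)" for k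
    unfolding ls_def using W_letters C_letters w(3,4)
    by (intro len2_detour_prefix[OF valid[unfolded ls_def]]) auto
  moreover have "word_eq R\<^sub>2 (replicate n (S1g, e) @ ls) (replicate n (S2g, e'))"
    unfolding ls_def W_def C_def using w(1,2) v(2) by (rule word_eq_s1_s2_detour)
  moreover have "length ls = 2 * length w + n + n * (1 + length v)"
    by (simp add: ls_def length_detour W_def C_def)
  ultimately show thesis
    using that valid by auto
qed

lemma s1_s2_path:
  fixes e e' :: bool
  assumes "group H" and "T \<subseteq> carrier H" and "d ` {..<p} \<subseteq> T" and "free_basis H d p"
    and "palindromic H (d ` {..<p}) u" and "n \<le> wlen H (d ` {..<p}) u"
  obtains ls where "\<forall>l \<in> set ls. valid2 T p (fst l)"
    and "word_eq R\<^sub>2 (replicate n (S1g, e) @ ls) (replicate n (S2g, e'))"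
    and "\<forall>k \<le> length ls. n \<le> len2 H T d p (replicate n (S1g, e) @ take k ls)"
    and "length ls = 2 * wlen H (d ` {..<p}) u + n + n * (1 + wlen H T u)"
proof -
  obtain w v where w: "\<forall>c \<in> set w. fst c < p" "rev w = w" "freely_reduced w"
      "length w = wlen H (d ` {..<p}) u"
    and v: "v \<in> lists (T \<times> UNIV)" "length v = wlen H T u"
      "word_eq R\<^sub>2 (map (apfst Tg) v) (map (apfst (Tg \<circ> d)) w)"
    using palindromic_index_word[OF assms(1-5)] by blast
  have "n \<le> length w"
    using assms(6) w(4) by simp
  then obtain ls where "\<forall>l \<in> set ls. valid2 T p (fst l)"
    and "word_eq R\<^sub>2 (replicate n (S1g, e) @ ls) (replicate n (S2g, e'))"
    and "\<forall>k \<le> length ls. n \<le> len2 H T d p (replicate n (S1g, e) @ take k ls)"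
    and "length ls = 2 * length w + n + n * (1 + length v)"
    by (rule s1_s2_path_of_index_word[OF w(1-3) _ v(1,3)])
  with that show thesis
    using w(4) v(2) by simp
qed

end

lemma mono_on_inverse_of_mono_bij:
  fixes \<Delta> f :: "real \<Rightarrow> real"
  assumes bij: "bij_betw \<Delta> {0..} {0..}" and mono: "mono_on {0..} \<Delta>"
    and f_\<Delta>: "\<And>x. 0 \<le> x \<Longrightarrow> f (\<Delta> x) = x" and \<Delta>_f: "\<And>y. 0 \<le> y \<Longrightarrow> \<Delta> (f y) = y"
  shows "\<And>y. 0 \<le> y \<Longrightarrow> 0 \<le> f y" and "mono_on {0..} f"
proof -
  show nonneg: "0 \<le> f y" if "0 \<le> y" for y
  proof -
    obtain x where "0 \<le> x" and "y = \<Delta> x"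
      using bij \<open>0 \<le> y\<close> unfolding bij_betw_def by force
    then show ?thesis
      using f_\<Delta> by simp
  qed
  show "mono_on {0..} f"
  proof (rule mono_onI)
    fix y y' :: real
    assume y: "y \<in> {0..}" "y' \<in> {0..}" "y \<le> y'"
    show "f y \<le> f y'"
    proof (rule ccontr)
      assume "\<not> f y \<le> f y'"
      then have "\<Delta> (f y') \<le> \<Delta> (f y)"
        using nonneg y by (intro mono_onD[OF mono]) auto
      then have "y' \<le> y"
        using \<Delta>_f y by simp
      with y \<open>\<not> f y \<le> f y'\<close> show False
        by simp
    qed
  qed
qed

lemma s1_s2_path_length_bound:
  fixes f :: "real \<Rightarrow> real" and D :: real
  assumes f_nonneg: "\<And>y. 0 \<le> y \<Longrightarrow> 0 \<le> f y" and f_mono: "mono_on {0..} f" and "1 < D"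
    and "real a \<le> D * real n" and "real b \<le> D * f (D * real n)"
  shows "real (2 * a + n + n * (1 + b)) \<le> (2 * D + 2) * real n * (f ((2 * D + 2) * real n) + 1)"
proof -
  define N where "N = 2 * D + 2"
  have Dn: "0 \<le> D * real n" and DN: "D * real n \<le> N * real n"
    using assms(3) by (auto intro: mult_right_mono simp: N_def)
  then have "D * f (D * real n) \<le> N * f (N * real n)"
    using assms(3) mono_onD[OF f_mono _ _ DN] f_nonneg[OF Dn] by (intro mult_mono) (auto simp: N_def)
  then have fDN: "real n * (D * f (D * real n)) \<le> real n * (N * f (N * real n))"
    by (rule mult_left_mono) simp
  have "real (2 * a + n + n * (1 + b)) = 2 * real a + 2 * real n + real n * real b"
    by (simp add: algebra_simps)
  also have "\<dots> \<le> 2 * (D * real n) + 2 * real n + real n * (D * f (D * real n))"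
    using assms(4,5) by (intro add_mono mult_left_mono) auto
  also have "\<dots> \<le> N * real n * (f (N * real n) + 1)"
    using fDN by (simp add: N_def algebra_simps)
  finally show ?thesis
    by (simp add: N_def)
qed

theorem lemma4p2:
  fixes H :: "('a, 'b) monoid_scheme" and T :: "'a set" and d :: "nat \<Rightarrow> 'a" and p :: nat
    and \<Delta> f :: "real \<Rightarrow> real" and D r\<^sub>0 :: real
  assumes fp: "finitely_presented_on H T"
    and dT: "d ` {..<p} \<subseteq> T"
    and free: "free_basis H d p"
    and \<Delta>_bij: "bij_betw \<Delta> {0..} {0..}"
    and \<Delta>_mono: "mono_on {0..} \<Delta>"
    and \<Delta>_lip: "lipschitz_equiv \<Delta> (distortion H T (d ` {..<p}))"
    and \<Delta>_ge: "\<And>r. r \<ge> 1 \<Longrightarrow> \<Delta> r \<ge> r"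
    and f_inv1: "\<And>x. x \<ge> 0 \<Longrightarrow> f (\<Delta> x) = x"
    and f_inv2: "\<And>y. y \<ge> 0 \<Longrightarrow> \<Delta> (f y) = y"
    and f_le: "\<And>g. g \<in> generate H (d ` {..<p}) \<Longrightarrow>
                 f (real (wlen H (d ` {..<p}) g)) \<le> real (wlen H T g)"
    and D_gt: "D > 1" and r0_ge: "r\<^sub>0 \<ge> 1"
    and certs: "\<And>r. r \<ge> r\<^sub>0 \<Longrightarrow> \<exists>u \<in> generate H (d ` {..<p}).
                 palindromic H (d ` {..<p}) u \<and>
                 r / D \<le> real (wlen H (d ` {..<p}) u) \<and> real (wlen H (d ` {..<p}) u) \<le> r \<and>
                 real (wlen H T u) \<le> D * f r"
  shows "\<exists>N\<^sub>2 > 0. \<forall>r::nat. real r \<ge> r\<^sub>0 \<longrightarrow> (\<forall>\<epsilon> \<epsilon>' :: bool.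
           \<exists>ls :: ('a gen2 \<times> bool) list.
             (\<forall>l \<in> set ls. valid2 T p (fst l)) \<and>
             word_eq (rels2 H T d p) (replicate r (S1g, \<epsilon>) @ ls) (replicate r (S2g, \<epsilon>')) \<and>
             (\<forall>k \<le> length ls. len2 H T d p (replicate r (S1g, \<epsilon>) @ take k ls) \<ge> r) \<and>
             real (length ls) \<le> N\<^sub>2 * real r * (f (N\<^sub>2 * real r) + 1))"
proof -
  have grp: "group H" and TH: "T \<subseteq> carrier H"
    using fp unfolding finitely_presented_on_def by auto
  have f_nonneg: "\<And>y. 0 \<le> y \<Longrightarrow> 0 \<le> f y" and f_mono: "mono_on {0..} f"
    using mono_on_inverse_of_mono_bij[OF \<Delta>_bij \<Delta>_mono f_inv1 f_inv2] by auto
  have "\<exists>ls. (\<forall>l \<in> set ls. valid2 T p (fst l)) \<and>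
      word_eq (rels2 H T d p) (replicate r (S1g, \<epsilon>) @ ls) (replicate r (S2g, \<epsilon>')) \<and>
      (\<forall>k \<le> length ls. len2 H T d p (replicate r (S1g, \<epsilon>) @ take k ls) \<ge> r) \<and>
      real (length ls) \<le> (2 * D + 2) * real r * (f ((2 * D + 2) * real r) + 1)"
    if "real r \<ge> r\<^sub>0" for r :: nat and \<epsilon> \<epsilon>' :: bool
  proof -
    have "r\<^sub>0 \<le> D * real r"
      using that r0_ge D_gt mult_right_mono[of 1 D "real r"] by linarith
    then obtain u where u: "palindromic H (d ` {..<p}) u" "r \<le> wlen H (d ` {..<p}) u"
      "real (wlen H (d ` {..<p}) u) \<le> D * real r" "real (wlen H T u) \<le> D * f (D * real r)"
      using certs D_gt by fastforce
    obtain ls where ls: "\<forall>l \<in> set ls. valid2 T p (fst l)"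
      "word_eq (rels2 H T d p) (replicate r (S1g, \<epsilon>) @ ls) (replicate r (S2g, \<epsilon>'))"
      "\<forall>k \<le> length ls. r \<le> len2 H T d p (replicate r (S1g, \<epsilon>) @ take k ls)"
      "length ls = 2 * wlen H (d ` {..<p}) u + r + r * (1 + wlen H T u)"
      by (rule s1_s2_path[OF grp TH dT free u(1,2)])
    have "real (length ls) \<le> (2 * D + 2) * real r * (f ((2 * D + 2) * real r) + 1)"
      using s1_s2_path_length_bound[OF f_nonneg f_mono D_gt u(3,4)] ls(4) by simp
    with ls show ?thesis
      by blast
  qed
  then show ?thesis
    using D_gt by (intro exI[of _ "2 * D + 2"]) auto
qed
end
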